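(* Let $G$ be a group with generating set $S$ not containing the identity. Then every color-preserving automorphism of the Cayley color digraph of $G$ with respect to $S$ is an isometry of $G$ with respect to the cardinal metric $d_C$.
   Context: The cardinal norm is $\|x\| = \min\{|A| : A\subseteq S,\ x\in\langle A\rangle\}$, where $\langle A\rangle$ is the subgroup generated by $A$, and $d_C(g,h)=\|g^{-1}h\|$. The Cayley color digraph has vertex set $G$ and, for each $x\in G$ and $c\in S$, an arc $(x,xc)$ of color $c$. A color-preserving automorphism is a digraph automorphism $\alpha$ (bijection of $G$ with $(x,y)$ an arc iff $(\alpha(x),\alpha(y))$ is an arc) such that $(x,y)$ has color $c$ iff $(\alpha(x),\alpha(y))$ has color $c$. *)

theory Defs
  imports "HOL-Algebra.Generated_Groups"
begin

definition cardinal_norm :: "('a, 'b) monoid_scheme \<Rightarrow> 'a set \<Rightarrow> 'a \<Rightarrow> nat" where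
  "cardinal_norm G S x = (LEAST n. \<exists>A. A \<subseteq> S \<and> finite A \<and> card A = n \<and> x \<in> generate G A)"

definition cardinal_dist :: "('a, 'b) monoid_scheme \<Rightarrow> 'a set \<Rightarrow> 'a \<Rightarrow> 'a \<Rightarrow> nat" where
  "cardinal_dist G S g h = cardinal_norm G S (inv\<^bsub>G\<^esub> g \<otimes>\<^bsub>G\<^esub> h)"

definition cayley_arc :: "('a, 'b) monoid_scheme \<Rightarrow> 'a set \<Rightarrow> 'a \<Rightarrow> 'a \<Rightarrow> 'a \<Rightarrow> bool" where
  "cayley_arc G S c x y \<longleftrightarrow> x \<in> carrier G \<and> c \<in> S \<and> y = x \<otimes>\<^bsub>G\<^esub> c"

definition color_preserving_aut :: "('a, 'b) monoid_scheme \<Rightarrow> 'a set \<Rightarrow> ('a \<Rightarrow> 'a) \<Rightarrow> bool" where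
  "color_preserving_aut G S \<alpha> \<longleftrightarrow>
     bij_betw \<alpha> (carrier G) (carrier G) \<and>
     (\<forall>x\<in>carrier G. \<forall>y\<in>carrier G.
        ((\<exists>c. cayley_arc G S c x y) \<longleftrightarrow> (\<exists>c. cayley_arc G S c (\<alpha> x) (\<alpha> y))) \<and>
        (\<forall>c. cayley_arc G S c x y \<longleftrightarrow> cayley_arc G S c (\<alpha> x) (\<alpha> y)))"

definition is_isometry :: "('a, 'b) monoid_scheme \<Rightarrow> 'a set \<Rightarrow> ('a \<Rightarrow> 'a) \<Rightarrow> bool" where
  "is_isometry G S \<alpha> \<longleftrightarrow>
     (\<forall>g\<in>carrier G. \<forall>h\<in>carrier G. cardinal_dist G S (\<alpha> g) (\<alpha> h) = cardinal_dist G S g h)"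

end

theory Submission
  imports Defs
begin

text \<open>A colour-preserving automorphism \<open>\<alpha>\<close> commutes with right multiplication by each
generator, since it maps the arc \<open>(x, x c)\<close> of colour \<open>c\<close> to an arc \<open>(\<alpha> x, \<alpha> x c)\<close>.
Hence it commutes with right multiplication by every element of the generated group, which is
all of \<open>G\<close>, so \<open>\<alpha>\<close> is left multiplication by \<open>\<alpha> \<one>\<close>. Left multiplications preserve
\<open>g\<inverse> h\<close> and therefore every distance of the form \<open>\<parallel>g\<inverse> h\<parallel>\<close>.\<close>

lemma (in group) cardinal_dist_left_mult:
  assumes "a \<in> carrier G" "g \<in> carrier G" "h \<in> carrier G"
  shows "cardinal_dist G S (a \<otimes> g) (a \<otimes> h) = cardinal_dist G S g h"
proof -
  have "inv (a \<otimes> g) \<otimes> (a \<otimes> h) = inv g \<otimes> (inv a \<otimes> (a \<otimes> h))"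
    using assms by (simp add: inv_mult_group m_assoc)
  also have "\<dots> = inv g \<otimes> h"
    using assms by (simp add: m_assoc[symmetric])
  finally show ?thesis
    unfolding cardinal_dist_def by simp
qed

lemma (in group) color_preserving_aut_right_mult:
  assumes "color_preserving_aut G S \<alpha>" "S \<subseteq> carrier G"
    and "x \<in> carrier G" "c \<in> S"
  shows "\<alpha> (x \<otimes> c) = \<alpha> x \<otimes> c"
proof -
  have "cayley_arc G S c x (x \<otimes> c)"
    using assms(3,4) unfolding cayley_arc_def by simp
  moreover have "x \<otimes> c \<in> carrier G"
    using assms(2-4) by auto
  ultimately have "cayley_arc G S c (\<alpha> x) (\<alpha> (x \<otimes> c))"
    using assms(1,3) unfolding color_preserving_aut_def by blast
  then show ?thesis
    unfolding cayley_arc_def by simp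
qed

lemma (in group) right_mult_commute_generate:
  assumes closed: "\<alpha> ` carrier G \<subseteq> carrier G" and "S \<subseteq> carrier G"
    and commute: "\<And>x c. x \<in> carrier G \<Longrightarrow> c \<in> S \<Longrightarrow> \<alpha> (x \<otimes> c) = \<alpha> x \<otimes> c"
    and "g \<in> generate G S"
  shows "\<forall>x \<in> carrier G. \<alpha> (x \<otimes> g) = \<alpha> x \<otimes> g"
  using \<open>g \<in> generate G S\<close>
proof induction
  case one
  show ?case
    using closed by auto
next
  case (incl c)
  then show ?case
    using commute by blast
next
  case (inv c)
  show ?case
  proof
    fix x assume x: "x \<in> carrier G"
    have c: "c \<in> carrier G"
      using inv.hyps \<open>S \<subseteq> carrier G\<close> by auto
    then have "\<alpha> x = \<alpha> (x \<otimes> inv c) \<otimes> c"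
      using commute[of "x \<otimes> inv c" c] x inv.hyps by (simp add: m_assoc)
    then show "\<alpha> (x \<otimes> inv c) = \<alpha> x \<otimes> inv c"
      using x c closed by (simp add: m_assoc image_subset_iff)
  qed
next
  case (eng g h)
  have g: "g \<in> carrier G" and h: "h \<in> carrier G"
    using eng.hyps generate_in_carrier[OF \<open>S \<subseteq> carrier G\<close>] by auto
  show ?case
  proof
    fix x assume x: "x \<in> carrier G"
    have "\<alpha> (x \<otimes> (g \<otimes> h)) = \<alpha> (x \<otimes> g \<otimes> h)"
      using x g h by (simp add: m_assoc)
    also have "\<dots> = \<alpha> x \<otimes> g \<otimes> h"
      using eng.IH x g by simp
    also have "\<dots> = \<alpha> x \<otimes> (g \<otimes> h)"
      using closed x g h by (simp add: m_assoc image_subset_iff)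
    finally show "\<alpha> (x \<otimes> (g \<otimes> h)) = \<alpha> x \<otimes> (g \<otimes> h)" .
  qed
qed

lemma (in group) color_preserving_aut_eq_left_mult:
  assumes "color_preserving_aut G S \<alpha>" "S \<subseteq> carrier G" "generate G S = carrier G"
    and "g \<in> carrier G"
  shows "\<alpha> g = \<alpha> \<one> \<otimes> g"
proof -
  have closed: "\<alpha> ` carrier G \<subseteq> carrier G"
    using assms(1) unfolding color_preserving_aut_def bij_betw_def by simp
  have "g \<in> generate G S"
    using assms(3,4) by simp
  then have "\<forall>x \<in> carrier G. \<alpha> (x \<otimes> g) = \<alpha> x \<otimes> g"
    by (rule right_mult_commute_generate[OF closed assms(2), rotated])
      (simp add: color_preserving_aut_right_mult[OF assms(1,2)])
  then have "\<alpha> (\<one> \<otimes> g) = \<alpha> \<one> \<otimes> g"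
    using one_closed by blast
  then show ?thesis
    using assms(4) by simp
qed

theorem mainTheorem10:
  fixes G :: "('a, 'b) monoid_scheme" and S :: "'a set" and \<alpha> :: "'a \<Rightarrow> 'a"
  assumes "group G"
    and "S \<subseteq> carrier G"
    and "generate G S = carrier G"
    and "\<one>\<^bsub>G\<^esub> \<notin> S"
    and "color_preserving_aut G S \<alpha>"
  shows "is_isometry G S \<alpha>"
proof -
  interpret group G by fact
  have one: "\<alpha> \<one>\<^bsub>G\<^esub> \<in> carrier G"
    using assms(5) unfolding color_preserving_aut_def bij_betw_def by auto
  note left_mult = color_preserving_aut_eq_left_mult[OF assms(5,2,3)]
  show ?thesis
    unfolding is_isometry_def
  proof (intro ballI)
    fix g h assume "g \<in> carrier G" "h \<in> carrier G"
    then show "cardinal_dist G S (\<alpha> g) (\<alpha> h) = cardinal_dist G S g h"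
      by (simp only: left_mult cardinal_dist_left_mult[OF one])
  qed
qed

end
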